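(* Under the uniform quantile margin assumption with parameter $\kappa$, and with $c$ satisfying $c\ge \max\{2,\sqrt{2\log(SATH(2^S-2)/\delta)}\}/\sqrt{\log(2SATH/\delta)}$, consider \textsc{UCB--QRL}. With probability at least $1-\delta$, simultaneously for every episode $t\in\{0,\dots,T-1\}$ and every state $s$, $$V^{\pi^\star,P^\star}_{\tau,0}(s)\ \le\ V^{\pi^t,P^t}_{\tau,0}(s).$$
   Context: Finite-horizon tabular MDP: state space $\mathcal S=\{s_1,\dots,s_S\}$, action space $\mathcal A$ with $|\mathcal A|=A$, horizon $H$, steps $h\in\{0,\dots,H-1\}$, deterministic rewards $r_h(s,a)\in[0,1]$, unknown true kernel $P^\star$. A kernel is $P=(P_h(\cdot\mid s,a))$ with each $P_h(\cdot\mid s,a)\in\Delta^S$. Deterministic Markov policy: $\pi=(\pi_h)$, $\pi_h:\mathcal S\to\mathcal A$. For $q\in(0,1]$, $Q_q(X)=\inf\{x:\mathbb P(X\le x)\ge q\}$. Quantile value: $V^{\pi,P}_{q,h}(s)=\inf\{x:\mathbb P(\sum_{k=h}^{H-1}r_k(S_k,A_k)\le x\mid S_h=s)\ge q\}$ with $A_k=\pi_k(S_k)$, $S_{k+1}\sim P_k(\cdot\mid S_k,A_k)$; $V^{\pi,P}_{q,H}\equiv0$. Continuation-mixture: $Z_{s,a,h}(p;V^{\pi,P}_{\cdot,h+1})$ is a random variable with CDF $x\mapsto\sum_i p_i\phi_i(x)$, $\phi_i(x)=\sup\{q\in[0,1]:V^{\pi,P}_{q,h+1}(s_i)\le x\}$.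 Uniform quantile margin assumption: there is $\kappa\in(0,1]$ such that for every $(h,s,a)$, deterministic Markov $\pi$ and $q\in(0,1]$, the CDF of $Z=Z_{s,a,h}(P^\star_h(\cdot\mid s,a);V^{\pi,P^\star}_{\cdot,h+1})$ has a jump of size at least $\kappa$ at $Q_q(Z)$. $\mathcal C_\kappa$ is the set of kernels $P$ satisfying the same jump condition with $P$ in place of $P^\star$ (both in $P_h(\cdot\mid s,a)$ and in $V^{\pi,P}$). \textsc{UCB--QRL}: each episode $t$ starts at a fixed $\bar s$ and runs $\pi^t$ in the true MDP. $N^t_h(s,a)$, $N^t_h(s,a,s')$ are visit/transition counts from episodes $0,\dots,t-1$; $\widehat P^t_h(s'\mid s,a)=N^t_h(s,a,s')/\max\{1,N^t_h(s,a)\}$; $f_\delta(n)=c\sqrt{\log(2SATH/\delta)/\max\{1,n\}}$; $\mathcal C^t_\delta=\{P:\|P_h(\cdot\mid s,a)-\widehat P^t_h(\cdot\mid s,a)\|_1\le f_\delta(N^t_h(s,a))\ \forall s,a,h\}$; $\bar{\mathcal C}^t_{\delta,\kappa}=\mathcal C^t_\delta\cap\mathcal C_\kappa$; $(\pi^t,P^t)$ jointly maximizes $V^{\pi,P}_{\tau,0}$ over deterministic Markov $\pi$ and $P\in\bar{\mathcal C}^t_{\delta,\kappa}$ (for each $t$, including $t=0$). $\pi^\star$ is an optimal policy for $\max_\pi V^{\pi,P^\star}_{\tau,0}$, $\tau\in(0,1)$ fixed. *)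

theory Defs
  imports "HOL-Probability.Probability"
begin

text \<open>A kernel is  P :: nat => 's => 'a => 's pmf  (P h s a = P_h(.|s,a)),
  a deterministic Markov policy is  pol :: nat => 's => 'a,
  rewards  r :: nat => 's => 'a => real.\<close>

type_synonym ('s,'a) kernel = "nat \<Rightarrow> 's \<Rightarrow> 'a \<Rightarrow> 's pmf"
type_synonym ('s,'a) policy = "nat \<Rightarrow> 's \<Rightarrow> 'a"

text \<open>Distribution of the cumulative reward over k steps, starting at step h in state s,
  following pol under kernel P: sum_{j=h}^{h+k-1} r_j(S_j,A_j).\<close>
primrec ret_dist :: "('s,'a) kernel \<Rightarrow> (nat \<Rightarrow> 's \<Rightarrow> 'a \<Rightarrow> real) \<Rightarrow> ('s,'a) policy
                      \<Rightarrow> nat \<Rightarrow> nat \<Rightarrow> 's \<Rightarrow> real pmf" where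
  "ret_dist P r pol 0 h s = return_pmf 0"
| "ret_dist P r pol (Suc k) h s =
     bind_pmf (P h s (pol h s))
       (\<lambda>s'. map_pmf (\<lambda>x. r h s (pol h s) + x) (ret_dist P r pol k (Suc h) s'))"

definition cdf_quantile :: "(real \<Rightarrow> real) \<Rightarrow> real \<Rightarrow> real" where
  "cdf_quantile F q = Inf {x. F x \<ge> q}"

definition cdf_pmf :: "real pmf \<Rightarrow> real \<Rightarrow> real" where
  "cdf_pmf M x = measure_pmf.prob M {..x}"

text \<open>Quantile value V^{pol,P}_{q,h}(s) (for 0 < q <= 1 and h <= H); V_{q,H} = 0.\<close>
definition Vq :: "('s,'a) kernel \<Rightarrow> (nat \<Rightarrow> 's \<Rightarrow> 'a \<Rightarrow> real) \<Rightarrow> nat \<Rightarrow> ('s,'a) policy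
                   \<Rightarrow> real \<Rightarrow> nat \<Rightarrow> 's \<Rightarrow> real" where
  "Vq P r H pol q h s = cdf_quantile (cdf_pmf (ret_dist P r pol (H - h) h s)) q"

text \<open>phi_i(x) = sup {q in [0,1]. V_{q,h}(s_i) <= x}, with the convention V_0 = -infinity
  (so q = 0 always belongs to the set).\<close>
definition phi :: "('s,'a) kernel \<Rightarrow> (nat \<Rightarrow> 's \<Rightarrow> 'a \<Rightarrow> real) \<Rightarrow> nat \<Rightarrow> ('s,'a) policy
                    \<Rightarrow> nat \<Rightarrow> 's \<Rightarrow> real \<Rightarrow> real" where
  "phi P r H pol h i x = Sup ({0} \<union> {q. 0 < q \<and> q \<le> 1 \<and> Vq P r H pol q h i \<le> x})"

text \<open>CDF of the continuation mixture Z_{s,a,h}(p; V_{.,h+1}):  x |-> sum_i p_i phi_i(x).\<close>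
definition mix_cdf :: "('s::finite) pmf \<Rightarrow> ('s \<Rightarrow> real \<Rightarrow> real) \<Rightarrow> real \<Rightarrow> real" where
  "mix_cdf p ph x = (\<Sum>i\<in>UNIV. pmf p i * ph i x)"

definition jump :: "(real \<Rightarrow> real) \<Rightarrow> real \<Rightarrow> real" where
  "jump F y = F y - Sup (F ` {..<y})"

definition quantile_margin :: "('s::finite,'a) kernel \<Rightarrow> (nat \<Rightarrow> 's \<Rightarrow> 'a \<Rightarrow> real) \<Rightarrow> nat
                                \<Rightarrow> real \<Rightarrow> bool" where
  "quantile_margin P r H \<kappa> \<longleftrightarrow>
     (\<forall>h<H. \<forall>s a. \<forall>pol::('s,'a) policy. \<forall>q. 0 < q \<and> q \<le> 1 \<longrightarrow>
        (let F = mix_cdf (P h s a) (phi P r H pol (Suc h))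
         in jump F (cdf_quantile F q) \<ge> \<kappa>))"

text \<open>An episode is the list of transitions (S_h, A_h, S_{h+1}), h = 0..H-1.
  Trajectory distribution of k steps from step h in state s.\<close>
type_synonym ('s,'a) episode = "('s \<times> 'a \<times> 's) list"

primrec traj :: "('s,'a) kernel \<Rightarrow> ('s,'a) policy \<Rightarrow> nat \<Rightarrow> nat \<Rightarrow> 's \<Rightarrow> ('s,'a) episode pmf" where
  "traj P pol 0 h s = return_pmf []"
| "traj P pol (Suc k) h s =
     bind_pmf (P h s (pol h s))
       (\<lambda>s'. map_pmf (\<lambda>rest. (s, pol h s, s') # rest) (traj P pol k (Suc h) s'))"

definition Ncount :: "('s,'a) episode list \<Rightarrow> nat \<Rightarrow> 's \<Rightarrow> 'a \<Rightarrow> nat" where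
  "Ncount hs h s a = length (filter (\<lambda>e. fst (e ! h) = s \<and> fst (snd (e ! h)) = a) hs)"

definition Ncount3 :: "('s,'a) episode list \<Rightarrow> nat \<Rightarrow> 's \<Rightarrow> 'a \<Rightarrow> 's \<Rightarrow> nat" where
  "Ncount3 hs h s a s' = length (filter (\<lambda>e. e ! h = (s, a, s')) hs)"

definition Phat :: "('s,'a) episode list \<Rightarrow> nat \<Rightarrow> 's \<Rightarrow> 'a \<Rightarrow> 's \<Rightarrow> real" where
  "Phat hs h s a s' = real (Ncount3 hs h s a s') / real (max 1 (Ncount hs h s a))"

definition conf_rad :: "nat \<Rightarrow> nat \<Rightarrow> nat \<Rightarrow> nat \<Rightarrow> real \<Rightarrow> real \<Rightarrow> nat \<Rightarrow> real" where
  "conf_rad S A T H c \<delta> n = c * sqrt (ln (2 * real S * real A * real T * real H / \<delta>) / real (max 1 n))"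

definition conf_set :: "nat \<Rightarrow> nat \<Rightarrow> real \<Rightarrow> real \<Rightarrow> ('s::finite,'a::finite) episode list
                         \<Rightarrow> ('s,'a) kernel set" where
  "conf_set T H c \<delta> hs = {P. \<forall>h<H. \<forall>s a.
      (\<Sum>s'\<in>UNIV. \<bar>pmf (P h s a) s' - Phat hs h s a s'\<bar>)
        \<le> conf_rad CARD('s) CARD('a) T H c \<delta> (Ncount hs h s a)}"

definition conf_set_kappa :: "(nat \<Rightarrow> 's \<Rightarrow> 'a \<Rightarrow> real) \<Rightarrow> nat \<Rightarrow> nat \<Rightarrow> real \<Rightarrow> real \<Rightarrow> real
                               \<Rightarrow> ('s::finite,'a::finite) episode list \<Rightarrow> ('s,'a) kernel set" where
  "conf_set_kappa r T H c \<delta> \<kappa> hs = conf_set T H c \<delta> hs \<inter> {P. quantile_margin P r H \<kappa>}"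

primrec run :: "('s,'a) kernel \<Rightarrow> (('s,'a) episode list \<Rightarrow> ('s,'a) policy \<times> ('s,'a) kernel)
                 \<Rightarrow> nat \<Rightarrow> 's \<Rightarrow> nat \<Rightarrow> ('s,'a) episode list pmf" where
  "run Pstar alg H sbar 0 = return_pmf []"
| "run Pstar alg H sbar (Suc t) =
     bind_pmf (run Pstar alg H sbar t)
       (\<lambda>hs. map_pmf (\<lambda>e. hs @ [e]) (traj Pstar (fst (alg hs)) H 0 sbar))"

end

theory Submission
  imports Defs
begin

text \<open>On the event that the true kernel lies in every confidence set \<open>C\<^sup>t\<^sub>\<delta>\<close>, the margin assumption
  puts it in \<open>C\<^sup>t\<^sub>\<delta> \<inter> C\<^sub>\<kappa>\<close>, and optimism of \<open>(\<pi>\<^sup>t, P\<^sup>t)\<close> gives the claimed inequality.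
  The true kernel leaves \<open>C\<^sup>t\<^sub>\<delta>\<close> only if, for some \<open>(h, s, a)\<close> and some \<open>n \<ge> 1\<close>, the empirical
  distribution of the first \<open>n\<close> successors observed at \<open>(h, s, a)\<close> is far in \<open>L\<^sub>1\<close> from
  \<open>P\<^sup>\<star>\<^sub>h(\<cdot>|s, a)\<close>. Although the policies depend on the history, these \<open>n\<close> successors are
  dominated by \<open>n\<close> i.i.d. draws, so the \<open>L\<^sub>1\<close> deviation inequality of Weissman et al. (Hoeffding
  for each of the \<open>2\<^sup>S - 2\<close> nontrivial sets of states) bounds each such event by \<open>\<delta>/(SATH)\<close>;
  a union bound over \<open>(h, s, a, n)\<close> concludes.\<close>

subsection \<open>Concentration of empirical distributions\<close>

definition empirical_l1_dev :: "'s::finite pmf \<Rightarrow> 's list \<Rightarrow> real" where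
  "empirical_l1_dev \<mu> xs = (\<Sum>y\<in>UNIV. \<bar>pmf \<mu> y - real (count_list xs y) / real (length xs)\<bar>)"

lemma map_pmf_map_replicate_pmf:
  "map_pmf (map f) (replicate_pmf n p) = replicate_pmf n (map_pmf f p)"
proof (induction n)
  case (Suc n)
  have "map_pmf (map f) (replicate_pmf (Suc n) p)
      = bind_pmf p (\<lambda>x. map_pmf (\<lambda>xs. f x # xs) (map_pmf (map f) (replicate_pmf n p)))"
    by (simp add: map_bind_pmf pmf.map_comp o_def map_pmf_def[symmetric])
  also have "\<dots> = bind_pmf (map_pmf f p) (\<lambda>y. map_pmf (\<lambda>xs. y # xs) (replicate_pmf n (map_pmf f p)))"
    by (simp add: Suc bind_map_pmf)
  also have "\<dots> = replicate_pmf (Suc n) (map_pmf f p)"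
    by (simp add: map_pmf_def)
  finally show ?case .
qed simp

lemma map_pmf_mem_eq_bernoulli_pmf:
  "map_pmf (\<lambda>y. y \<in> D) p = bernoulli_pmf (measure_pmf.prob p D)"
proof (rule pmf_eqI)
  fix b :: bool
  have "measure_pmf.prob p {x. x \<notin> D} = 1 - measure_pmf.prob p D"
    using measure_pmf.prob_compl[of D p] by (simp add: Compl_eq_Diff_UNIV[symmetric] Collect_neg_eq)
  then show "pmf (map_pmf (\<lambda>y. y \<in> D) p) b = pmf (bernoulli_pmf (measure_pmf.prob p D)) b"
    by (cases b) (simp_all add: pmf_map vimage_def)
qed

lemma map_pmf_count_replicate_pmf:
  "map_pmf (\<lambda>xs. length (filter (\<lambda>y. y \<in> D) xs)) (replicate_pmf n p)
     = binomial_pmf n (measure_pmf.prob p D)"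
proof -
  have "map_pmf (\<lambda>xs. length (filter (\<lambda>y. y \<in> D) xs)) (replicate_pmf n p)
      = map_pmf (length \<circ> filter id) (map_pmf (map (\<lambda>y. y \<in> D)) (replicate_pmf n p))"
    by (simp add: pmf.map_comp o_def filter_map)
  then show ?thesis
    by (simp add: map_pmf_map_replicate_pmf map_pmf_mem_eq_bernoulli_pmf binomial_pmf_altdef)
qed

lemma prob_replicate_pmf_freq_ge:
  assumes "0 < n" "0 \<le> e"
  shows "measure_pmf.prob (replicate_pmf n p)
           {xs. measure_pmf.prob p D + e \<le> real (length (filter (\<lambda>y. y \<in> D) xs)) / n}
         \<le> exp (- 2 * n * e\<^sup>2)"
proof -
  interpret binomial_distribution n "measure_pmf.prob p D"
    by unfold_locales auto
  show ?thesis
    using prob_ge'[OF assms] by (simp flip: map_pmf_count_replicate_pmf)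
qed

lemma sum_count_list_eq_length_filter:
  "finite D \<Longrightarrow> (\<Sum>y\<in>D. count_list xs y) = length (filter (\<lambda>y. y \<in> D) xs)"
proof (induction xs)
  case (Cons x xs)
  have "(\<Sum>y\<in>D. count_list (x # xs) y) = (\<Sum>y\<in>D. count_list xs y + (if x = y then 1 else 0))"
    by (intro sum.cong) auto
  with Cons show ?case
    by (simp add: sum.distrib)
qed simp

lemma sum_abs_diff_eq_twice_excess:
  fixes p q :: "'b \<Rightarrow> real"
  assumes "finite A" "sum p A = sum q A"
  shows "(\<Sum>x\<in>A. \<bar>p x - q x\<bar>) = 2 * (\<Sum>x\<in>{x\<in>A. p x < q x}. q x - p x)"
proof -
  let ?D = "{x\<in>A. p x < q x}"
  have split: "sum f A = sum f ?D + sum f (A - ?D)" for f :: "'b \<Rightarrow> real"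
    using assms(1) by (simp add: sum.subset_diff[of ?D A])
  have "(\<Sum>x\<in>A. q x - p x) = 0"
    using assms(2) by (simp add: sum_subtractf)
  moreover have "(\<Sum>x\<in>?D. \<bar>p x - q x\<bar>) = (\<Sum>x\<in>?D. q x - p x)"
    by (intro sum.cong) auto
  moreover have "(\<Sum>x\<in>A - ?D. \<bar>p x - q x\<bar>) = - (\<Sum>x\<in>A - ?D. q x - p x)"
    by (subst sum_negf[symmetric], intro sum.cong) auto
  ultimately show ?thesis
    using split[of "\<lambda>x. q x - p x"] split[of "\<lambda>x. \<bar>p x - q x\<bar>"] by linarith
qed

lemma empirical_l1_dev_gt_imp_excess_set:
  fixes \<mu> :: "'s::finite pmf"
  assumes "xs \<noteq> []" "0 \<le> \<epsilon>" "\<epsilon> < empirical_l1_dev \<mu> xs"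
  shows "\<exists>D. D \<noteq> {} \<and> D \<noteq> UNIV \<and>
           measure_pmf.prob \<mu> D + \<epsilon> / 2 \<le> real (length (filter (\<lambda>y. y \<in> D) xs)) / length xs"
proof -
  define q where "q y = real (count_list xs y) / real (length xs)" for y
  define D where "D = {y. pmf \<mu> y < q y}"
  have sum_q: "sum q D = real (length (filter (\<lambda>y. y \<in> D) xs)) / length xs" for D
    unfolding q_def by (simp add: sum_count_list_eq_length_filter flip: sum_divide_distrib of_nat_sum)
  have "sum q UNIV = 1"
    using sum_q[of UNIV] assms(1) by simp
  then have "sum (pmf \<mu>) UNIV = sum q UNIV"
    by (simp add: sum_pmf_eq_1)
  then have "empirical_l1_dev \<mu> xs = 2 * (\<Sum>y\<in>D. q y - pmf \<mu> y)"
    unfolding empirical_l1_dev_def q_def[symmetric] D_def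
    using sum_abs_diff_eq_twice_excess[of UNIV "pmf \<mu>" q] by simp
  then have excess: "\<epsilon> / 2 < sum q D - measure_pmf.prob \<mu> D"
    using assms(3) by (simp add: sum_subtractf measure_measure_pmf_finite)
  then have "measure_pmf.prob \<mu> D + \<epsilon> / 2 \<le> real (length (filter (\<lambda>y. y \<in> D) xs)) / length xs"
    using sum_q[of D] by linarith
  moreover have "D \<noteq> {}"
    using excess assms(2) by auto
  moreover have "D \<noteq> UNIV"
    using excess assms(2) \<open>sum (pmf \<mu>) UNIV = sum q UNIV\<close> by (auto simp: measure_measure_pmf_finite)
  ultimately show ?thesis
    by blast
qed

lemma prob_empirical_l1_dev_gt_le:
  fixes \<mu> :: "'s::finite pmf"
  assumes n: "0 < n" and \<epsilon>: "0 \<le> \<epsilon>"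
  shows "measure_pmf.prob (replicate_pmf n \<mu>) {xs. \<epsilon> < empirical_l1_dev \<mu> xs}
           \<le> (2 ^ CARD('s) - 2) * exp (- real n * \<epsilon>\<^sup>2 / 2)"
proof -
  let ?R = "replicate_pmf n \<mu>"
  define F :: "'s set set" where "F = Pow UNIV - {{}, UNIV}"
  define E where "E D = {xs. measure_pmf.prob \<mu> D + \<epsilon> / 2 \<le> real (length (filter (\<lambda>y. y \<in> D) xs)) / n}"
    for D
  have cover: "{xs. \<epsilon> < empirical_l1_dev \<mu> xs} \<inter> set_pmf ?R \<subseteq> (\<Union>D\<in>F. E D)"
  proof
    fix xs assume "xs \<in> {xs. \<epsilon> < empirical_l1_dev \<mu> xs} \<inter> set_pmf ?R"
    then have "length xs = n" "\<epsilon> < empirical_l1_dev \<mu> xs"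
      by (simp_all add: set_replicate_pmf)
    then show "xs \<in> (\<Union>D\<in>F. E D)"
      using empirical_l1_dev_gt_imp_excess_set[of xs \<epsilon> \<mu>] n \<epsilon> by (auto simp: F_def E_def)
  qed
  have "card F = 2 ^ CARD('s) - 2"
    unfolding F_def by (subst card_Diff_subset) (auto simp: card_Pow)
  moreover have "(2::nat) \<le> 2 ^ CARD('s)"
    using self_le_power[of 2 "CARD('s)"] by simp
  ultimately have card_F: "real (card F) = 2 ^ CARD('s) - 2"
    by (simp add: of_nat_diff)
  have "measure_pmf.prob ?R {xs. \<epsilon> < empirical_l1_dev \<mu> xs}
      = measure_pmf.prob ?R ({xs. \<epsilon> < empirical_l1_dev \<mu> xs} \<inter> set_pmf ?R)"
    by (simp add: measure_Int_set_pmf)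
  also have "\<dots> \<le> measure_pmf.prob ?R (\<Union>D\<in>F. E D)"
    by (rule measure_pmf.finite_measure_mono[OF cover]) simp
  also have "\<dots> \<le> (\<Sum>D\<in>F. measure_pmf.prob ?R (E D))"
    by (rule measure_pmf.finite_measure_subadditive_finite) (auto simp: F_def)
  also have "\<dots> \<le> (\<Sum>D\<in>F. exp (- 2 * n * (\<epsilon> / 2)\<^sup>2))"
    unfolding E_def using prob_replicate_pmf_freq_ge[OF n, of "\<epsilon> / 2"] \<epsilon> by (intro sum_mono) simp
  also have "\<dots> = (2 ^ CARD('s) - 2) * exp (- real n * \<epsilon>\<^sup>2 / 2)"
    by (simp add: card_F power_divide)
  finally show ?thesis .
qed

subsection \<open>Successors observed at a state-action pair\<close>

fun episode_samples :: "nat \<Rightarrow> 's \<Rightarrow> 'a \<Rightarrow> nat \<Rightarrow> ('s,'a) episode \<Rightarrow> 's list" where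
  "episode_samples h s a j [] = []"
| "episode_samples h s a j ((s0, a0, s1) # e) =
     (if j = h \<and> s0 = s \<and> a0 = a then [s1] else []) @ episode_samples h s a (Suc j) e"

definition history_samples :: "nat \<Rightarrow> 's \<Rightarrow> 'a \<Rightarrow> ('s,'a) episode list \<Rightarrow> 's list" where
  "history_samples h s a hs = concat (map (episode_samples h s a 0) hs)"

lemma episode_samples_eq:
  "episode_samples h s a j e =
     (if j \<le> h \<and> h < j + length e \<and> fst (e ! (h - j)) = s \<and> fst (snd (e ! (h - j))) = a
      then [snd (snd (e ! (h - j)))] else [])"
proof (induction h s a j e rule: episode_samples.induct)
  case (2 h s a j s0 a0 s1 e)
  show ?case
  proof (cases "j = h")
    case False
    then show ?thesis
      using 2 by (auto simp: Suc_diff_Suc nth_Cons' not_less_eq_eq)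
  qed (use 2 in simp)
qed simp

lemma history_samples_Nil [simp]: "history_samples h s a [] = []"
  by (simp add: history_samples_def)

lemma history_samples_append [simp]:
  "history_samples h s a (hs @ hs') = history_samples h s a hs @ history_samples h s a hs'"
  by (simp add: history_samples_def)

lemma length_history_samples_le: "length (history_samples h s a hs) \<le> length hs"
  by (induction hs) (auto simp: history_samples_def episode_samples_eq)

lemma Ncount_eq_length_history_samples:
  assumes "\<forall>e\<in>set hs. length e = H" "h < H"
  shows "Ncount hs h s a = length (history_samples h s a hs)"
  using assms by (induction hs) (auto simp: Ncount_def history_samples_def episode_samples_eq)

lemma Ncount3_eq_count_list_history_samples:
  assumes "\<forall>e\<in>set hs. length e = H" "h < H"
  shows "Ncount3 hs h s a s' = count_list (history_samples h s a hs) s'"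
  using assms by (induction hs) (auto simp: Ncount3_def history_samples_def episode_samples_eq)

subsection \<open>Domination by i.i.d. sampling\<close>

definition completion_prob :: "'b pmf \<Rightarrow> nat \<Rightarrow> 'b list set \<Rightarrow> 'b list \<Rightarrow> ennreal" where
  "completion_prob \<mu> n B l = emeasure (replicate_pmf (n - length l) \<mu>) {xs. take n (l @ xs) \<in> B}"

lemma completion_prob_complete:
  "n \<le> length l \<Longrightarrow> completion_prob \<mu> n B l = indicator {l. take n l \<in> B} l"
  by (simp add: completion_prob_def indicator_def)

lemma nn_integral_completion_prob_snoc:
  fixes \<mu> :: "'b pmf"
  assumes "length l < n"
  shows "(\<integral>\<^sup>+x. completion_prob \<mu> n B (l @ [x]) \<partial>\<mu>) = completion_prob \<mu> n B l"
proof -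
  obtain m where m: "n - length l = Suc m" "n - Suc (length l) = m"
    using assms by (metis Suc_diff_Suc diff_Suc_eq_diff_pred diff_Suc_1)
  then have "completion_prob \<mu> n B l
      = (\<integral>\<^sup>+x. \<integral>\<^sup>+xs. indicator {xs. take n (l @ xs) \<in> B} (x # xs) \<partial>replicate_pmf m \<mu> \<partial>\<mu>)"
    by (simp add: completion_prob_def)
  also have "\<dots> = (\<integral>\<^sup>+x. completion_prob \<mu> n B (l @ [x]) \<partial>\<mu>)"
    using m by (intro nn_integral_cong)
      (simp add: completion_prob_def indicator_def flip: nn_integral_indicator[simplified])
  finally show ?thesis ..
qed

text \<open>Each visit to \<open>(h, s, a)\<close> draws a fresh successor from \<open>\<mu> = P h s a\<close>, so the completion
  probability of the stream of observed successors is a martingale.\<close>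

lemma nn_integral_completion_prob_traj:
  assumes "P h s a = \<mu>"
  shows "(\<integral>\<^sup>+e. completion_prob \<mu> n B (l @ episode_samples h s a j e) \<partial>traj P pol k j s0)
           = completion_prob \<mu> n B l"
proof (induction k arbitrary: j s0 l)
  case (Suc k)
  have "(\<integral>\<^sup>+e. completion_prob \<mu> n B (l @ episode_samples h s a j e) \<partial>traj P pol (Suc k) j s0)
      = (\<integral>\<^sup>+s1. completion_prob \<mu> n B (l @ (if j = h \<and> s0 = s \<and> pol j s0 = a then [s1] else []))
           \<partial>P j s0 (pol j s0))"
    by (simp flip: append_assoc add: Suc.IH)
  also have "\<dots> = completion_prob \<mu> n B l"
  proof (cases "j = h \<and> s0 = s \<and> pol j s0 = a")
    case True
    then show ?thesis
      using assms nn_integral_completion_prob_snoc[of l n \<mu> B]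
      by (cases "length l < n") (auto simp: completion_prob_complete indicator_def measure_pmf.emeasure_space_1)
  next
    case False
    then show ?thesis
      by (simp only: if_not_P[OF False] append_Nil2) (simp add: measure_pmf.emeasure_space_1)
  qed
  finally show ?case .
qed (simp add: measure_pmf.emeasure_space_1)

lemma nn_integral_completion_prob_run:
  assumes "P h s a = \<mu>"
  shows "(\<integral>\<^sup>+hs. completion_prob \<mu> n B (history_samples h s a hs) \<partial>run P alg H sbar t)
           = completion_prob \<mu> n B []"
proof (induction t)
  case (Suc t)
  have "(\<integral>\<^sup>+hs. completion_prob \<mu> n B (history_samples h s a hs) \<partial>run P alg H sbar (Suc t))
      = (\<integral>\<^sup>+hs. \<integral>\<^sup>+e. completion_prob \<mu> n B (history_samples h s a hs @ episode_samples h s a 0 e)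
             \<partial>traj P (fst (alg hs)) H 0 sbar \<partial>run P alg H sbar t)"
    by (simp add: history_samples_def)
  also have "\<dots> = (\<integral>\<^sup>+hs. completion_prob \<mu> n B (history_samples h s a hs) \<partial>run P alg H sbar t)"
    by (simp only: nn_integral_completion_prob_traj[where P = P and h = h and s = s and a = a, OF assms])
  finally show ?case
    using Suc.IH by simp
qed simp

lemma prob_history_samples_le:
  fixes P :: "('s,'a) kernel"
  shows "measure_pmf.prob (run P alg H sbar t)
           {hs. n \<le> length (history_samples h s a hs) \<and> take n (history_samples h s a hs) \<in> B}
         \<le> measure_pmf.prob (replicate_pmf n (P h s a)) B"
proof -
  let ?R = "replicate_pmf n (P h s a)"
  let ?E = "{hs. n \<le> length (history_samples h s a hs) \<and> take n (history_samples h s a hs) \<in> B}"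
  have "emeasure (run P alg H sbar t) ?E = (\<integral>\<^sup>+hs. indicator ?E hs \<partial>run P alg H sbar t)"
    by simp
  also have "\<dots> \<le> (\<integral>\<^sup>+hs. completion_prob (P h s a) n B (history_samples h s a hs) \<partial>run P alg H sbar t)"
    by (intro nn_integral_mono) (auto simp: completion_prob_complete indicator_def)
  also have "\<dots> = emeasure ?R {xs. take n xs \<in> B}"
    by (simp only: nn_integral_completion_prob_run) (simp add: completion_prob_def)
  also have "\<dots> = emeasure ?R B"
    by (intro emeasure_eq_AE) (auto simp: AE_measure_pmf_iff set_replicate_pmf)
  finally show ?thesis
    by (simp add: measure_pmf.emeasure_eq_measure)
qed

lemma mem_set_pmf_run_lengths:
  "hs \<in> set_pmf (run P alg H sbar t) \<Longrightarrow> length hs = t \<and> (\<forall>e\<in>set hs. length e = H)"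
proof (induction t arbitrary: hs)
  case (Suc t)
  have "length e = k" if "e \<in> set_pmf (traj P pol k j s0)" for e pol k j s0
    using that by (induction k arbitrary: j s0 e) auto
  with Suc show ?case
    by auto
qed simp

lemma take_mem_set_pmf_run:
  assumes "hs \<in> set_pmf (run P alg H sbar T)" "t \<le> T"
  shows "take t hs \<in> set_pmf (run P alg H sbar t)"
  using assms
proof (induction T arbitrary: hs)
  case (Suc T)
  then obtain hs' e where hs: "hs = hs' @ [e]" and hs': "hs' \<in> set_pmf (run P alg H sbar T)"
    by auto
  have "length hs' = T"
    using mem_set_pmf_run_lengths[OF hs'] by simp
  then show ?case
    using Suc hs hs' by (cases "t \<le> T") (auto simp: le_Suc_eq)
qed simp

subsection \<open>The true kernel stays in the confidence sets\<close>

lemma Phat_eq_history_samples: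
  assumes "\<forall>e\<in>set hs. length e = H" "h < H"
  shows "Phat hs h s a s' = real (count_list (history_samples h s a hs) s')
                              / real (max 1 (length (history_samples h s a hs)))"
  by (simp add: Phat_def Ncount_eq_length_history_samples[OF assms]
      Ncount3_eq_count_list_history_samples[OF assms])

lemma sample_deviation_of_not_mem_conf_set:
  fixes P :: "('s::finite,'a::finite) kernel"
  assumes lengths: "\<forall>e\<in>set hs. length e = H"
    and P: "P \<notin> conf_set T H c \<delta> hs"
    and rad0: "1 < conf_rad CARD('s) CARD('a) T H c \<delta> 0"
  shows "\<exists>h<H. \<exists>s a. history_samples h s a hs \<noteq> [] \<and>
           conf_rad CARD('s) CARD('a) T H c \<delta> (length (history_samples h s a hs))
             < empirical_l1_dev (P h s a) (history_samples h s a hs)"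
proof -
  obtain h s a where h: "h < H" and dev: "conf_rad CARD('s) CARD('a) T H c \<delta> (Ncount hs h s a)
      < (\<Sum>s'\<in>UNIV. \<bar>pmf (P h s a) s' - Phat hs h s a s'\<bar>)"
    using P by (auto simp: conf_set_def not_le)
  define L where "L = history_samples h s a hs"
  have Ncount: "Ncount hs h s a = length L"
    unfolding L_def using lengths h by (rule Ncount_eq_length_history_samples)
  have Phat: "Phat hs h s a s' = real (count_list L s') / real (max 1 (length L))" for s'
    unfolding L_def using lengths h by (rule Phat_eq_history_samples)
  have "L \<noteq> []"
  proof
    assume "L = []"
    then have "(\<Sum>s'\<in>UNIV. \<bar>pmf (P h s a) s' - Phat hs h s a s'\<bar>) = 1"
      by (simp add: Phat sum_pmf_eq_1)
    with dev rad0 \<open>L = []\<close> show False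
      by (simp add: Ncount)
  qed
  then have "max 1 (length L) = length L"
    by (cases L) simp_all
  with dev \<open>L \<noteq> []\<close> h show ?thesis
    unfolding Ncount Phat empirical_l1_dev_def L_def by auto
qed

lemma mult_exp_le_of_sqrt_ln_le:
  fixes K \<beta> \<rho> :: real
  assumes "0 < K" "0 < \<beta>" "sqrt (2 * ln (K / \<beta>)) \<le> \<rho>"
  shows "K * exp (- \<rho>\<^sup>2 / 2) \<le> \<beta>"
proof (cases "K \<le> \<beta>")
  case True
  have "K * exp (- \<rho>\<^sup>2 / 2) \<le> K * 1"
    using assms(1) by (intro mult_left_mono) auto
  with True show ?thesis
    by simp
next
  case False
  then have ln: "0 \<le> ln (K / \<beta>)"
    using assms(2) by simp
  then have "2 * ln (K / \<beta>) = (sqrt (2 * ln (K / \<beta>)))\<^sup>2"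
    by simp
  also have "\<dots> \<le> \<rho>\<^sup>2"
    using assms(3) ln by (intro power_mono) auto
  finally have "exp (- \<rho>\<^sup>2 / 2) \<le> exp (- ln (K / \<beta>))"
    by simp
  also have "\<dots> = \<beta> / K"
    using assms(1,2) by (simp add: exp_minus)
  finally show ?thesis
    using assms(1) by (simp add: field_simps)
qed

lemma conf_rad_bounds:
  fixes S A T H n :: nat and c \<delta> :: real
  assumes pos: "0 < S" "0 < A" "0 < T" "0 < H" and \<delta>: "0 < \<delta>" "\<delta> < 1"
    and c: "c \<ge> max 2 (sqrt (2 * ln (real S * real A * real T * real H * (2 ^ S - 2) / \<delta>)))
                 / sqrt (ln (2 * real S * real A * real T * real H / \<delta>))"
  shows "2 \<le> conf_rad S A T H c \<delta> 0"
    and "0 \<le> conf_rad S A T H c \<delta> n"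
    and "0 < n \<Longrightarrow> (2 ^ S - 2) * exp (- real n * (conf_rad S A T H c \<delta> n)\<^sup>2 / 2)
                       \<le> \<delta> / (real S * real A * real T * real H)"
proof -
  define M where "M = real S * real A * real T * real H"
  define \<rho> where "\<rho> = c * sqrt (ln (2 * M / \<delta>))"
  have "1 \<le> M"
    using pos by (simp add: M_def Suc_le_eq flip: of_nat_mult)
  then have L: "0 < ln (2 * M / \<delta>)"
    using \<delta> by (simp add: field_simps)
  have "max 2 (sqrt (2 * ln (M * (2 ^ S - 2) / \<delta>))) \<le> \<rho>"
    using c L by (simp add: \<rho>_def M_def divide_le_eq mult.assoc)
  then have \<rho>2: "2 \<le> \<rho>" and \<rho>_ln: "sqrt (2 * ln (M * (2 ^ S - 2) / \<delta>)) \<le> \<rho>"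
    by simp_all
  then have "0 < c * sqrt (ln (2 * M / \<delta>))"
    by (simp add: \<rho>_def)
  then have "0 \<le> c"
    using L by (auto simp: zero_less_mult_iff)
  have rad: "conf_rad S A T H c \<delta> m = c * sqrt (ln (2 * M / \<delta>) / real (max 1 m))" for m
    by (simp add: conf_rad_def M_def mult.assoc)
  show "2 \<le> conf_rad S A T H c \<delta> 0"
    using \<rho>2 by (simp add: rad \<rho>_def)
  show "0 \<le> conf_rad S A T H c \<delta> n"
    using \<open>0 \<le> c\<close> L by (simp add: rad)
  assume "0 < n"
  then have "real n * (conf_rad S A T H c \<delta> n)\<^sup>2 = \<rho>\<^sup>2"
    using L by (simp add: rad \<rho>_def power_mult_distrib)
  moreover have "(2 ^ S - 2) * exp (- \<rho>\<^sup>2 / 2) \<le> \<delta> / M"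
  proof (cases "S = 1")
    case False
    then have "(2::real) ^ 2 \<le> 2 ^ S"
      using pos by (intro power_increasing) auto
    then show ?thesis
      using mult_exp_le_of_sqrt_ln_le[of "2 ^ S - 2" "\<delta> / M" \<rho>] \<rho>_ln \<delta> \<open>1 \<le> M\<close>
      by (simp add: field_simps)
  qed (use \<delta> \<open>1 \<le> M\<close> in simp)
  ultimately show "(2 ^ S - 2) * exp (- real n * (conf_rad S A T H c \<delta> n)\<^sup>2 / 2) \<le> \<delta> / M"
    by simp
qed

lemma sample_prefix_deviation_of_not_mem_conf_set:
  fixes P :: "('s::finite,'a::finite) kernel"
  assumes hs: "hs \<in> set_pmf (run P alg H sbar T)" and "t < T"
    and P: "P \<notin> conf_set T H c \<delta> (take t hs)"
    and rad0: "1 < conf_rad CARD('s) CARD('a) T H c \<delta> 0"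
  shows "\<exists>h<H. \<exists>s a. \<exists>n\<in>{1..T}. n \<le> length (history_samples h s a hs) \<and>
           conf_rad CARD('s) CARD('a) T H c \<delta> n
             < empirical_l1_dev (P h s a) (take n (history_samples h s a hs))"
proof -
  have "take t hs \<in> set_pmf (run P alg H sbar t)"
    using hs \<open>t < T\<close> by (simp add: take_mem_set_pmf_run)
  then have "\<forall>e\<in>set (take t hs). length e = H"
    by (simp add: mem_set_pmf_run_lengths)
  then obtain h s a where "h < H" and "history_samples h s a (take t hs) \<noteq> []" and
    "conf_rad CARD('s) CARD('a) T H c \<delta> (length (history_samples h s a (take t hs)))
       < empirical_l1_dev (P h s a) (history_samples h s a (take t hs))"
    using sample_deviation_of_not_mem_conf_set[OF _ P rad0] by blast
  moreover have "history_samples h s a hs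
      = history_samples h s a (take t hs) @ history_samples h s a (drop t hs)"
    by (metis append_take_drop_id history_samples_append)
  moreover have "length (history_samples h s a (take t hs)) \<le> t"
    using length_history_samples_le[of h s a "take t hs"] by simp
  ultimately show ?thesis
    using \<open>t < T\<close> by (intro exI[of _ h] conjI exI[of _ s] exI[of _ a]
          bexI[of _ "length (history_samples h s a (take t hs))"])
      (auto simp: Suc_le_eq)
qed

lemma prob_not_mem_conf_set_le:
  fixes P :: "('s::finite,'a::finite) kernel"
  assumes "0 < H" "0 < T" and \<delta>: "0 < \<delta>" "\<delta> < 1"
    and c: "c \<ge> max 2 (sqrt (2 * ln (real CARD('s) * real CARD('a) * real T * real H
                        * (2 ^ CARD('s) - 2) / \<delta>)))
                     / sqrt (ln (2 * real CARD('s) * real CARD('a) * real T * real H / \<delta>))"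
  shows "measure_pmf.prob (run P alg H sbar T) {hs. \<exists>t<T. P \<notin> conf_set T H c \<delta> (take t hs)} \<le> \<delta>"
proof -
  let ?M = "run P alg H sbar T" and ?SATH = "real CARD('s) * real CARD('a) * real T * real H"
  define rad where "rad = conf_rad CARD('s) CARD('a) T H c \<delta>"
  have card_pos: "0 < CARD('s)" "0 < CARD('a)"
    by simp_all
  note rad_bounds = conf_rad_bounds[OF card_pos assms(2,1) \<delta> c, folded rad_def]
  define I where "I = {..<H} \<times> (UNIV :: 's set) \<times> (UNIV :: 'a set) \<times> {1..T}"
  define Bad where "Bad = (\<lambda>(h, s, a, n). {hs. n \<le> length (history_samples h s a hs) \<and>
      take n (history_samples h s a hs) \<in> {xs. rad n < empirical_l1_dev (P h s a) xs}})"
  have "{hs. \<exists>t<T. P \<notin> conf_set T H c \<delta> (take t hs)} \<inter> set_pmf ?M \<subseteq> (\<Union>i\<in>I. Bad i)"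
    using sample_prefix_deviation_of_not_mem_conf_set[of _ P alg H sbar T _ c \<delta>] rad_bounds(1)
    by (fastforce simp: I_def Bad_def rad_def)
  then have "measure_pmf.prob ?M {hs. \<exists>t<T. P \<notin> conf_set T H c \<delta> (take t hs)}
      \<le> measure_pmf.prob ?M (\<Union>i\<in>I. Bad i)"
    by (subst measure_Int_set_pmf[symmetric]) (rule measure_pmf.finite_measure_mono, auto)
  also have "\<dots> \<le> (\<Sum>i\<in>I. measure_pmf.prob ?M (Bad i))"
    by (rule measure_pmf.finite_measure_subadditive_finite) (auto simp: I_def)
  also have "\<dots> \<le> (\<Sum>i\<in>I. \<delta> / ?SATH)"
  proof (rule sum_mono)
    fix i assume "i \<in> I"
    then obtain h s a n where i: "i = (h, s, a, n)" and "0 < n"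
      by (auto simp: I_def)
    have "measure_pmf.prob ?M (Bad i)
        \<le> measure_pmf.prob (replicate_pmf n (P h s a)) {xs. rad n < empirical_l1_dev (P h s a) xs}"
      unfolding i Bad_def by (simp only: case_prod_conv prob_history_samples_le)
    also have "\<dots> \<le> (2 ^ CARD('s) - 2) * exp (- real n * (rad n)\<^sup>2 / 2)"
      using \<open>0 < n\<close> rad_bounds(2) by (rule prob_empirical_l1_dev_gt_le)
    also have "\<dots> \<le> \<delta> / ?SATH"
      using \<open>0 < n\<close> by (rule rad_bounds(3))
    finally show "measure_pmf.prob ?M (Bad i) \<le> \<delta> / ?SATH" .
  qed
  also have "\<dots> = \<delta>"
    using assms(1,2) by (simp add: I_def card_cartesian_product)
  finally show ?thesis .
qed

theorem mainTheorem2: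
  fixes Pstar :: "nat \<Rightarrow> 's::finite \<Rightarrow> 'a::finite \<Rightarrow> 's pmf"
    and r :: "nat \<Rightarrow> 's \<Rightarrow> 'a \<Rightarrow> real"
    and H T :: nat and \<delta> \<tau> \<kappa> c :: real and sbar :: 's
    and pistar :: "nat \<Rightarrow> 's \<Rightarrow> 'a"
    and alg :: "('s \<times> 'a \<times> 's) list list \<Rightarrow> (nat \<Rightarrow> 's \<Rightarrow> 'a) \<times> (nat \<Rightarrow> 's \<Rightarrow> 'a \<Rightarrow> 's pmf)"
  assumes H_pos: "0 < H"
    and delta: "0 < \<delta>" "\<delta> < 1"
    and tau: "0 < \<tau>" "\<tau> < 1"
    and kappa: "0 < \<kappa>" "\<kappa> \<le> 1"
    and rew: "\<And>h s a. h < H \<Longrightarrow> 0 \<le> r h s a \<and> r h s a \<le> 1"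
    and margin: "quantile_margin Pstar r H \<kappa>"
    and c_bound: "c \<ge> max 2 (sqrt (2 * ln (real CARD('s) * real CARD('a) * real T * real H
                        * (2 ^ CARD('s) - 2) / \<delta>)))
                     / sqrt (ln (2 * real CARD('s) * real CARD('a) * real T * real H / \<delta>))"
    and pistar_opt: "\<And>pol s. Vq Pstar r H pol \<tau> 0 s \<le> Vq Pstar r H pistar \<tau> 0 s"
    and alg_max: "\<And>t hs. t < T \<Longrightarrow> hs \<in> set_pmf (run Pstar alg H sbar t) \<Longrightarrow>
        snd (alg hs) \<in> conf_set_kappa r T H c \<delta> \<kappa> hs \<and>
        (\<forall>pol. \<forall>P \<in> conf_set_kappa r T H c \<delta> \<kappa> hs. \<forall>s.
            Vq P r H pol \<tau> 0 s \<le> Vq (snd (alg hs)) r H (fst (alg hs)) \<tau> 0 s)"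
  shows "measure_pmf.prob (run Pstar alg H sbar T)
           {hs. \<forall>t<T. \<forall>s. Vq Pstar r H pistar \<tau> 0 s
                  \<le> Vq (snd (alg (take t hs))) r H (fst (alg (take t hs))) \<tau> 0 s}
         \<ge> 1 - \<delta>"
proof (cases "T = 0")
  case False
  \<comment> \<open>Optimism bounds the value of every policy, so the optimality of \<open>pistar\<close> is not needed.\<close>
  let ?M = "run Pstar alg H sbar T"
  define bad where "bad = {hs. \<exists>t<T. Pstar \<notin> conf_set T H c \<delta> (take t hs)}"
  have "(UNIV - bad) \<inter> set_pmf ?M \<subseteq> {hs. \<forall>t<T. \<forall>s. Vq Pstar r H pistar \<tau> 0 s
                  \<le> Vq (snd (alg (take t hs))) r H (fst (alg (take t hs))) \<tau> 0 s}"
  proof clarify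
    fix hs t s assume "hs \<notin> bad" "hs \<in> set_pmf ?M" "t < T"
    then have "take t hs \<in> set_pmf (run Pstar alg H sbar t)"
         and "Pstar \<in> conf_set_kappa r T H c \<delta> \<kappa> (take t hs)"
      using margin by (auto simp: bad_def conf_set_kappa_def take_mem_set_pmf_run)
    with \<open>t < T\<close> show "Vq Pstar r H pistar \<tau> 0 s
        \<le> Vq (snd (alg (take t hs))) r H (fst (alg (take t hs))) \<tau> 0 s"
      using alg_max by blast
  qed
  then have "measure_pmf.prob ?M (UNIV - bad) \<le> measure_pmf.prob ?M {hs. \<forall>t<T. \<forall>s.
      Vq Pstar r H pistar \<tau> 0 s \<le> Vq (snd (alg (take t hs))) r H (fst (alg (take t hs))) \<tau> 0 s}"
    by (subst measure_Int_set_pmf[symmetric]) (rule measure_pmf.finite_measure_mono, auto)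
  moreover have "measure_pmf.prob ?M bad \<le> \<delta>"
    unfolding bad_def using H_pos False delta c_bound by (intro prob_not_mem_conf_set_le) auto
  ultimately show ?thesis
    using measure_pmf.prob_compl[of bad ?M] by simp
qed (use delta in simp)

end
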